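(* Let $R$ be an $L$-layered domain$^\dagger$ and suppose $L=L_{\ge 1}$, i.e. $\ell\ge 1$ for every $\ell\in L$ (for example $L=\mathbb{N}$). Then every invertible element $a$ of $R$ is tangible, i.e. $a\in R_1$.
   Context: A semiring$^\dagger$ is a structure $(L,+,\cdot,1)$ with $(L,\cdot,1)$ a monoid, $(L,+)$ an abelian semigroup, and two-sided distributivity (no zero element required). $L$ has a designated sub-semiring$^\dagger$ $L_+$ of positive elements with $1\in L_+$; $k\ge\ell$ means $k=\ell$ or $k=\ell+p$ with $p\in L_+$, assumed to be a partial order; $L_{\ge1}=\{\ell\in L:\ell\ge 1\}$. An $L$-quasi-layered domain$^\dagger$ is a commutative semiring$^\dagger$ $R$ with a decomposition into disjoint subsets $R=\bigsqcup_{\ell\in L}R_\ell$ and sort transition maps $\nu_{m,\ell}:R_\ell\to R_m$ ($m\ge\ell$) with $\nu_{\ell,\ell}=\mathrm{id}$, $\nu_{m,\ell}\circ\nu_{\ell,k}=\nu_{m,k}$, satisfying: (A1) $\mathbb{1}_R\in R_1$; (A2) $R_kR_\ell\subseteq R_{k\ell}$; (A3) $\nu_{m,k}(a)\nu_{m',\ell}(b)=\nu_{mm',k\ell}(ab)$; (A4) $\nu_{\ell,k}(a)+\nu_{\ell',k}(a)=\nu_{\ell+\ell',k}(a)$; (B) if $a\in R_k$, $b\in R_\ell$, $a\cong_\nu b$ then $a+b\in R_{k+\ell}$ and $a+b\cong_\nu a$ (and $a+b=a$ if $k+p=k$ for some $p\in L_+$). Here $a\cong_\nu b$ means $\nu_{m,k}(a)=\nu_{m,\ell}(b)$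 for some $m\ge k,\ell$. An $L$-layered domain$^\dagger$ is such an $R$ which is $\nu$-bipotent: writing $a\le_\nu b$ iff $a+b\cong_\nu b$, for $a\not\cong_\nu b$ either $a<_\nu b$ or $b<_\nu a$, and $a<_\nu b$ implies $a+b=b$. Elements of $R_1$ are tangible. *)

theory Defs
  imports Main
begin

text \<open>
  Semiring-dagger: the classes semiring (abelian additive semigroup, multiplicative
  semigroup, two-sided distributivity, no zero) together with monoid_mult (unit 1).
  The sort semiring L is a type 'l of this class; L_+ is a set Lp.
  The layered domain R is a type 'r of class comm_semiring + comm_monoid_mult;
  the decomposition R = disjoint union of R_l is given by a sort function
  s :: 'r => 'l (R_l = {a. s a = l}); the sort transition maps are nu m l :: 'r => 'r.
\<close>

definition Lge :: "'l::{semiring,monoid_mult} set \<Rightarrow> 'l \<Rightarrow> 'l \<Rightarrow> bool" where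
  "Lge Lp k l \<longleftrightarrow> k = l \<or> (\<exists>p\<in>Lp. k = l + p)"

definition positive_cone :: "'l::{semiring,monoid_mult} set \<Rightarrow> bool" where
  "positive_cone Lp \<longleftrightarrow> 1 \<in> Lp \<and> (\<forall>p\<in>Lp. \<forall>q\<in>Lp. p + q \<in> Lp \<and> p * q \<in> Lp)
     \<and> (\<forall>k l. Lge Lp k l \<longrightarrow> Lge Lp l k \<longrightarrow> k = l)"

definition nu_equiv ::
  "'l::{semiring,monoid_mult} set \<Rightarrow> ('r \<Rightarrow> 'l) \<Rightarrow> ('l \<Rightarrow> 'l \<Rightarrow> 'r \<Rightarrow> 'r) \<Rightarrow> 'r \<Rightarrow> 'r \<Rightarrow> bool" where
  "nu_equiv Lp s nu a b \<longleftrightarrow>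
     (\<exists>m. Lge Lp m (s a) \<and> Lge Lp m (s b) \<and> nu m (s a) a = nu m (s b) b)"

definition nu_le ::
  "'l::{semiring,monoid_mult} set \<Rightarrow> ('r::comm_semiring \<Rightarrow> 'l) \<Rightarrow> ('l \<Rightarrow> 'l \<Rightarrow> 'r \<Rightarrow> 'r) \<Rightarrow> 'r \<Rightarrow> 'r \<Rightarrow> bool" where
  "nu_le Lp s nu a b \<longleftrightarrow> nu_equiv Lp s nu (a + b) b"

definition nu_less ::
  "'l::{semiring,monoid_mult} set \<Rightarrow> ('r::comm_semiring \<Rightarrow> 'l) \<Rightarrow> ('l \<Rightarrow> 'l \<Rightarrow> 'r \<Rightarrow> 'r) \<Rightarrow> 'r \<Rightarrow> 'r \<Rightarrow> bool" where
  "nu_less Lp s nu a b \<longleftrightarrow> nu_le Lp s nu a b \<and> \<not> nu_equiv Lp s nu a b"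

definition quasi_layered_domain ::
  "'l::{semiring,monoid_mult} set \<Rightarrow> ('r::{comm_semiring,comm_monoid_mult} \<Rightarrow> 'l)
     \<Rightarrow> ('l \<Rightarrow> 'l \<Rightarrow> 'r \<Rightarrow> 'r) \<Rightarrow> bool" where
  "quasi_layered_domain Lp s nu \<longleftrightarrow>
     positive_cone Lp \<and>
     \<comment> \<open>transition maps: R_l \<rightarrow> R_m for m \<ge> l, identity, composition\<close>
     (\<forall>m l a. Lge Lp m l \<longrightarrow> s a = l \<longrightarrow> s (nu m l a) = m) \<and>
     (\<forall>l a. s a = l \<longrightarrow> nu l l a = a) \<and>
     (\<forall>m l k a. Lge Lp m l \<longrightarrow> Lge Lp l k \<longrightarrow> s a = k \<longrightarrow> nu m l (nu l k a) = nu m k a) \<and>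
     \<comment> \<open>(A1)\<close>
     s 1 = 1 \<and>
     \<comment> \<open>(A2)\<close>
     (\<forall>a b. s (a * b) = s a * s b) \<and>
     \<comment> \<open>(A3)\<close>
     (\<forall>m m' k l a b. s a = k \<longrightarrow> s b = l \<longrightarrow> Lge Lp m k \<longrightarrow> Lge Lp m' l \<longrightarrow>
         Lge Lp (m * m') (k * l) \<longrightarrow>
         nu m k a * nu m' l b = nu (m * m') (k * l) (a * b)) \<and>
     \<comment> \<open>(A4)\<close>
     (\<forall>l l' k a. s a = k \<longrightarrow> Lge Lp l k \<longrightarrow> Lge Lp l' k \<longrightarrow> Lge Lp (l + l') k \<longrightarrow>
         nu l k a + nu l' k a = nu (l + l') k a) \<and>
     \<comment> \<open>(B)\<close>
     (\<forall>a b. nu_equiv Lp s nu a b \<longrightarrow>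
         s (a + b) = s a + s b \<and> nu_equiv Lp s nu (a + b) a \<and>
         ((\<exists>p\<in>Lp. s a + p = s a) \<longrightarrow> a + b = a))"

definition layered_domain ::
  "'l::{semiring,monoid_mult} set \<Rightarrow> ('r::{comm_semiring,comm_monoid_mult} \<Rightarrow> 'l)
     \<Rightarrow> ('l \<Rightarrow> 'l \<Rightarrow> 'r \<Rightarrow> 'r) \<Rightarrow> bool" where
  "layered_domain Lp s nu \<longleftrightarrow>
     quasi_layered_domain Lp s nu \<and>
     (\<forall>a b. \<not> nu_equiv Lp s nu a b \<longrightarrow> nu_less Lp s nu a b \<or> nu_less Lp s nu b a) \<and>
     (\<forall>a b. nu_less Lp s nu a b \<longrightarrow> a + b = b)"

end

theory Submission
  imports Defs
begin

text \<open>Sorts are multiplicative, so \<open>a * b = 1\<close> forces \<open>s a * s b = 1\<close>. In the sort semiring,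
  multiplying by an element \<open>\<ge> 1\<close> can only increase a positive element, so
  \<open>1 = s a * s b \<ge> s a \<ge> 1\<close>, and antisymmetry of \<open>\<ge>\<close> gives \<open>s a = 1\<close>.\<close>

lemma Lge_one_imp_in_cone:
  assumes "positive_cone Lp" and "Lge Lp l 1"
  shows "l \<in> Lp"
  using assms unfolding positive_cone_def Lge_def by auto

lemma Lge_mult_right:
  assumes "positive_cone Lp" and "k \<in> Lp" and "Lge Lp l 1"
  shows "Lge Lp (k * l) k"
proof (cases "l = 1")
  case False
  then obtain p where "p \<in> Lp" and "l = 1 + p"
    using assms(3) unfolding Lge_def by blast
  moreover have "k * p \<in> Lp"
    using assms(1,2) \<open>p \<in> Lp\<close> unfolding positive_cone_def by blast
  ultimately show ?thesis
    unfolding Lge_def by (auto simp: distrib_left)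
qed (simp add: Lge_def)

lemma mult_eq_one_imp_eq_one:
  assumes "positive_cone Lp" and "Lge Lp k 1" and "Lge Lp l 1" and "k * l = 1"
  shows "k = 1"
proof -
  have "Lge Lp 1 k"
    using Lge_mult_right[OF assms(1) Lge_one_imp_in_cone[OF assms(1,2)] assms(3)] assms(4)
    by simp
  then show ?thesis
    using assms(1,2) unfolding positive_cone_def by blast
qed

theorem lemma3p16:
  fixes Lp :: "'l::{semiring,monoid_mult} set"
    and s :: "'r::{comm_semiring,comm_monoid_mult} \<Rightarrow> 'l"
    and nu :: "'l \<Rightarrow> 'l \<Rightarrow> 'r \<Rightarrow> 'r"
    and a :: 'r
  assumes "layered_domain Lp s nu"
    and "\<forall>l. Lge Lp l 1"
    and "\<exists>b. a * b = 1"
  shows "s a = 1"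
proof -
  obtain b where "a * b = 1" using assms(3) by blast
  have "positive_cone Lp" and "s 1 = 1" and "\<forall>a b. s (a * b) = s a * s b"
    using assms(1) unfolding layered_domain_def quasi_layered_domain_def by blast+
  then have "s a * s b = 1"
    using \<open>a * b = 1\<close> by metis
  then show ?thesis
    using mult_eq_one_imp_eq_one \<open>positive_cone Lp\<close> assms(2) by blast
qed

end
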